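(* Consider the continuous-time system $\dot x=Ax+Bu+Lf(t,z)$, $z=Hx$, with $A,B,L$ unknown, $H\in\mathbb{R}^{p\times n}$ known, controlled by $u=Kx+Mf(t,z)$, and data $U_0,X_0,X_1,F_0$ (with $X_1$ containing sampled state derivatives) satisfying $X_1=AX_0+BU_0+LF_0$. Suppose there exist $Y_1\in\mathbb{R}^{T\times n}$, $Y_2\in\mathbb{R}^{T\times p}$ such that $X_0Y_1$ is symmetric positive definite, $Y_1^\top X_1^\top+X_1Y_1\prec 0$, $X_1Y_2+X_0Y_1H^\top=0$, $X_0Y_2=0$, $F_0Y_2=I_p$, $F_0Y_1=0$. Then with $K=U_0Y_1(X_0Y_1)^{-1}$ and $M=U_0Y_2$, the origin of $\dot x=(A+BK)x+(L+BM)f(t,Hx)$ is globally uniformly asymptotically stable for every $f:\mathbb{R}\times\mathbb{R}^p\to\mathbb{R}^p$ (piecewise continuous in $t$, locally Lipschitz in $z$) satisfying $z^\top f(t,z)\ge 0$ for all $t,z$.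
   Context: Data: $U_0=[u(t_0)\cdots u(t_{T-1})]$, $X_0=[x(t_0)\cdots x(t_{T-1})]$, $X_1=[\dot x(t_0)\cdots\dot x(t_{T-1})]$, $F_0=[f(t_0,z(t_0))\cdots f(t_{T-1},z(t_{T-1}))]$ from an experiment on the system. *)

theory Defs
  imports "HOL-Analysis.Analysis"
begin

definition pos_def_mat :: "real^'n^'n \<Rightarrow> bool" where
  "pos_def_mat P \<longleftrightarrow> (\<forall>x. x \<noteq> 0 \<longrightarrow> x \<bullet> (P *v x) > 0)"

definition neg_def_mat :: "real^'n^'n \<Rightarrow> bool" where
  "neg_def_mat P \<longleftrightarrow> (\<forall>x. x \<noteq> 0 \<longrightarrow> x \<bullet> (P *v x) < 0)"

definition piecewise_continuous_in_t :: "(real \<Rightarrow> 'a::topological_space \<Rightarrow> 'b::topological_space) \<Rightarrow> bool" where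
  "piecewise_continuous_in_t f \<longleftrightarrow>
     (\<forall>a b. \<exists>S. finite S \<and>
        continuous_on (({a..b} - S) \<times> UNIV) (\<lambda>(t,z). f t z) \<and>
        (\<forall>s\<in>S. \<forall>z. (\<exists>l. ((\<lambda>t. f t z) \<longlongrightarrow> l) (at_left s)) \<and>
                    (\<exists>r. ((\<lambda>t. f t z) \<longlongrightarrow> r) (at_right s))))"

definition is_solution :: "(real \<Rightarrow> real^'n \<Rightarrow> real^'n) \<Rightarrow> real \<Rightarrow> (real \<Rightarrow> real^'n) \<Rightarrow> bool" where
  "is_solution F t0 x \<longleftrightarrow> continuous_on {t0..} x \<and>
     (\<forall>t\<ge>t0. ((\<lambda>s. F s (x s)) has_integral (x t - x t0)) {t0..t})"

text \<open>Global uniform asymptotic stability of the origin of x' = F(t,x) (Khalil, Def. 4.4):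
  origin is an equilibrium, solutions exist for all forward time, and the origin is
  uniformly stable, globally uniformly bounded and globally uniformly attractive.\<close>
definition GUAS :: "(real \<Rightarrow> real^'n \<Rightarrow> real^'n) \<Rightarrow> bool" where
  "GUAS F \<longleftrightarrow>
     (\<forall>t. F t 0 = 0) \<and>
     (\<forall>t0 x0. \<exists>x. is_solution F t0 x \<and> x t0 = x0) \<and>
     (\<forall>\<epsilon>>0. \<exists>\<delta>>0. \<forall>t0 x. is_solution F t0 x \<and> norm (x t0) < \<delta> \<longrightarrow>
        (\<forall>t\<ge>t0. norm (x t) < \<epsilon>)) \<and>
     (\<forall>a>0. \<exists>\<beta>. \<forall>t0 x. is_solution F t0 x \<and> norm (x t0) < a \<longrightarrow>
        (\<forall>t\<ge>t0. norm (x t) < \<beta>)) \<and>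
     (\<forall>\<eta>>0. \<forall>c>0. \<exists>T\<ge>0. \<forall>t0 x. is_solution F t0 x \<and> norm (x t0) < c \<longrightarrow>
        (\<forall>t\<ge>t0 + T. norm (x t) < \<eta>))"

end

theory Submission
  imports Defs "HOL-Real_Asymp.Real_Asymp"
begin

text \<open>With \<open>Q = (X0 Y1)\<inverse>\<close>, the data equation together with \<open>F0 Y1 = 0\<close>, \<open>X0 Y2 = 0\<close> and
  \<open>F0 Y2 = I\<close> rewrites the closed loop as \<open>x' = X1 Y1 Q x - X0 Y1 H\<^sup>T f(t, H x)\<close>, in which the
  unknown matrices \<open>A\<close>, \<open>B\<close>, \<open>L\<close> no longer occur. For \<open>V x = x\<^sup>T Q x\<close> and \<open>y = Q x\<close> one finds
  \<open>V' = y\<^sup>T (Y1\<^sup>T X1\<^sup>T + X1 Y1) y - 2 (H x)\<^sup>T f(t, H x) \<le> -\<gamma> V\<close> by the LMI and the sector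
  condition. This gives \<open>|x t| \<le> k exp (-c (t - t0)) |x t0|\<close> uniformly in the initial time,
  hence global uniform asymptotic stability.

  Solutions exist for all forward time: Picard iteration solves the system whose state is radially
  truncated at a radius exceeding \<open>k |x t0|\<close>. The truncation is a positive rescaling of the
  state, so it preserves the sector condition, and the exponential estimate shows that the truncated
  solution never reaches the truncation radius, so it solves the original system.\<close>

section \<open>Matrices and quadratic forms\<close>

lemma matrix_add_rdistrib: "((A::'a::semiring_1^'n^'m) + B) ** C = A ** C + B ** C"
  by (vector matrix_matrix_mult_def sum.distrib[symmetric] distrib_right)

lemma uminus_matrix_vector_mult: "(- (A::'a::ring_1^'n^'m)) *v x = - (A *v x)"
  and matrix_vector_mult_uminus: "A *v (- x) = - (A *v x)"
  by (simp_all add: matrix_vector_mult_def sum_negf vec_eq_iff)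

lemma continuous_on_matrix_vector_mult [continuous_intros]:
  "continuous_on S g \<Longrightarrow> continuous_on S (\<lambda>s. (A::real^'n^'m) *v g s)"
  by (rule bounded_linear.continuous_on[OF matrix_vector_mul_bounded_linear])

lemma matrix_vector_mult_norm_le:
  fixes A :: "real^'n^'m"
  obtains C where "C > 0" "\<And>x. norm (A *v x) \<le> C * norm x"
  using bounded_linear.pos_bounded[OF matrix_vector_mul_bounded_linear[of A]]
  by (auto simp: mult.commute)

lemma quadratic_form_le:
  fixes A :: "real^'n^'n"
  obtains C where "C > 0" "\<And>x. x \<bullet> (A *v x) \<le> C * (norm x)\<^sup>2"
proof -
  obtain C where C: "C > 0" "\<And>x. norm (A *v x) \<le> C * norm x"
    using matrix_vector_mult_norm_le[of A] by blast
  have "x \<bullet> (A *v x) \<le> C * (norm x)\<^sup>2" for x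
  proof -
    have "x \<bullet> (A *v x) \<le> norm x * norm (A *v x)" by (rule norm_cauchy_schwarz)
    also have "\<dots> \<le> norm x * (C * norm x)" by (intro mult_left_mono C(2)) simp
    finally show ?thesis by (simp add: power2_eq_square mult_ac)
  qed
  with C(1) show ?thesis using that by blast
qed

lemma pos_def_mat_quadratic_form_ge:
  fixes P :: "real^'n^'n"
  assumes "pos_def_mat P"
  obtains m where "m > 0" "\<And>x. m * (norm x)\<^sup>2 \<le> x \<bullet> (P *v x)"
proof -
  let ?q = "\<lambda>x. x \<bullet> (P *v x)"
  have "continuous_on (sphere 0 1) ?q" by (intro continuous_intros)
  then obtain u where u: "u \<in> sphere 0 1" and u_min: "\<And>y. y \<in> sphere 0 1 \<Longrightarrow> ?q u \<le> ?q y"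
    using continuous_attains_inf[of "sphere (0::real^'n) 1" ?q] by auto
  have "u \<noteq> 0" using u by auto
  then have "?q u > 0" using assms by (simp add: pos_def_mat_def)
  moreover have "?q u * (norm x)\<^sup>2 \<le> ?q x" for x
  proof (cases "x = 0")
    case False
    have "?q u \<le> ?q ((1 / norm x) *\<^sub>R x)" using False by (intro u_min) simp
    also have "\<dots> = ?q x / (norm x)\<^sup>2"
      by (simp add: matrix_vector_mult_scaleR power2_eq_square)
    finally show ?thesis using False by (simp add: field_simps)
  qed simp
  ultimately show ?thesis using that by blast
qed

lemma neg_def_mat_quadratic_form_le:
  fixes N :: "real^'n^'n"
  assumes "neg_def_mat N"
  obtains c where "c > 0" "\<And>x. x \<bullet> (N *v x) \<le> - c * (norm x)\<^sup>2"
proof -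
  have "pos_def_mat (- N)"
    using assms by (simp add: pos_def_mat_def neg_def_mat_def uminus_matrix_vector_mult)
  then obtain c where "c > 0" and c: "\<And>x. c * (norm x)\<^sup>2 \<le> x \<bullet> ((- N) *v x)"
    using pos_def_mat_quadratic_form_ge by blast
  moreover have "x \<bullet> (N *v x) \<le> - c * (norm x)\<^sup>2" for x
    using c[of x] by (simp add: uminus_matrix_vector_mult)
  ultimately show ?thesis using that by blast
qed

lemma pos_def_mat_invertible:
  fixes P :: "real^'n^'n"
  assumes "pos_def_mat P"
  shows "invertible P"
proof -
  have "\<forall>x. P *v x = 0 \<longrightarrow> x = 0"
    using assms unfolding pos_def_mat_def by (metis inner_zero_right less_irrefl)
  then obtain P' where "P' ** P = mat 1" using matrix_left_invertible_ker by blast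
  then show ?thesis unfolding invertible_def using matrix_left_right_inverse by blast
qed

lemma matrix_inv_right: "invertible A \<Longrightarrow> A ** matrix_inv A = mat 1"
  and matrix_inv_left: "invertible A \<Longrightarrow> matrix_inv A ** A = mat 1"
  unfolding invertible_def matrix_inv_def by (metis (mono_tags, lifting) someI)+

lemma transpose_matrix_inv_symmetric:
  fixes P :: "'a::comm_semiring_1^'n^'n"
  assumes "invertible P" "transpose P = P"
  shows "transpose (matrix_inv P) = matrix_inv P"
proof -
  have "transpose (matrix_inv P) ** P = mat 1"
    using assms matrix_inv_right by (metis matrix_transpose_mul transpose_mat)
  then show ?thesis
    by (metis assms(1) matrix_inv_right matrix_mul_assoc matrix_mul_lid matrix_mul_rid)
qed

lemma quadratic_form_right_inverse:
  fixes P Q :: "real^'n^'n"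
  assumes "P ** Q = mat 1"
  shows "x \<bullet> (Q *v x) = (Q *v x) \<bullet> (P *v (Q *v x))"
  using assms by (simp add: matrix_vector_mul_assoc inner_commute)

lemma pos_def_mat_matrix_inv:
  fixes P :: "real^'n^'n"
  assumes "pos_def_mat P"
  shows "pos_def_mat (matrix_inv P)"
  unfolding pos_def_mat_def
proof (intro allI impI)
  fix x :: "real^'n" assume "x \<noteq> 0"
  have PQ: "P ** matrix_inv P = mat 1"
    using assms by (intro matrix_inv_right pos_def_mat_invertible)
  then have "matrix_inv P *v x \<noteq> 0"
    using \<open>x \<noteq> 0\<close> by (metis matrix_vector_mul_assoc matrix_vector_mul_lid matrix_vector_mult_0_right)
  then show "x \<bullet> (matrix_inv P *v x) > 0"
    using assms quadratic_form_right_inverse[OF PQ] by (simp add: pos_def_mat_def)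
qed

section \<open>The data-driven closed loop\<close>

lemma data_driven_state_gain:
  fixes A :: "'a::comm_ring_1^'n^'n" and B :: "'a^'m^'n" and L :: "'a^'p^'n"
    and U0 :: "'a^'t^'m" and X0 X1 :: "'a^'t^'n" and F0 :: "'a^'t^'p"
    and Y1 :: "'a^'n^'t" and Q :: "'a^'n^'n"
  assumes "X1 = A ** X0 + B ** U0 + L ** F0" "F0 ** Y1 = 0" "X0 ** Y1 ** Q = mat 1"
  shows "A + B ** (U0 ** Y1 ** Q) = X1 ** Y1 ** Q"
proof -
  have "X1 ** Y1 = A ** (X0 ** Y1) + B ** (U0 ** Y1)"
    using assms(1,2) by (simp add: matrix_add_rdistrib flip: matrix_mul_assoc)
  then have "X1 ** Y1 ** Q = A ** (X0 ** Y1 ** Q) + B ** (U0 ** Y1 ** Q)"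
    by (simp add: matrix_add_rdistrib matrix_mul_assoc)
  with assms(3) show ?thesis by simp
qed

lemma data_driven_nonlinearity_gain:
  fixes A :: "'a::comm_ring_1^'n^'n" and B :: "'a^'m^'n" and L :: "'a^'p^'n"
    and H :: "'a^'n^'p" and U0 :: "'a^'t^'m" and X0 X1 :: "'a^'t^'n" and F0 :: "'a^'t^'p"
    and Y1 :: "'a^'n^'t" and Y2 :: "'a^'p^'t"
  assumes "X1 = A ** X0 + B ** U0 + L ** F0" "X1 ** Y2 + X0 ** Y1 ** transpose H = 0"
    and "X0 ** Y2 = 0" "F0 ** Y2 = mat 1"
  shows "L + B ** (U0 ** Y2) = - (X0 ** Y1 ** transpose H)"
proof -
  have "X1 ** Y2 = A ** (X0 ** Y2) + B ** (U0 ** Y2) + L ** (F0 ** Y2)"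
    using assms(1) by (simp add: matrix_add_rdistrib flip: matrix_mul_assoc)
  then have "X1 ** Y2 = L + B ** (U0 ** Y2)"
    using assms(3,4) by (simp add: add.commute)
  with assms(2) show ?thesis by (simp add: eq_neg_iff_add_eq_0)
qed

lemma closed_loop_lyapunov_derivative:
  fixes P Q W :: "real^'n^'n" and H :: "real^'n^'p"
  assumes "Q ** P = mat 1" "transpose Q = Q"
  shows "2 * (x \<bullet> (Q *v ((W ** Q) *v x + (- (P ** transpose H)) *v w)))
           = (Q *v x) \<bullet> ((transpose W + W) *v (Q *v x)) - 2 * ((H *v x) \<bullet> w)"
proof -
  have "x \<bullet> (Q *v ((W ** Q) *v x)) = (Q *v x) \<bullet> (W *v (Q *v x))"
    using assms(2) by (metis dot_lmul_matrix transpose_matrix_vector matrix_vector_mul_assoc)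
  moreover have "x \<bullet> (Q *v ((- (P ** transpose H)) *v w)) = - ((H *v x) \<bullet> w)"
  proof -
    have "Q *v ((- (P ** transpose H)) *v w) = - (transpose H *v w)"
      using assms(1)
      by (simp add: uminus_matrix_vector_mult matrix_vector_mult_uminus matrix_vector_mul_assoc
          matrix_mul_assoc)
    moreover have "x \<bullet> (transpose H *v w) = (H *v x) \<bullet> w"
      by (metis dot_lmul_matrix inner_commute transpose_matrix_vector)
    ultimately show ?thesis by simp
  qed
  moreover have "y \<bullet> (transpose W *v y) = y \<bullet> (W *v y)" for y :: "real^'n"
    by (simp add: dot_lmul_matrix[symmetric] inner_commute)
  ultimately show ?thesis
    by (simp add: matrix_vector_right_distrib matrix_vector_mult_add_rdistrib inner_add_right)
qed

lemma closed_loop_dissipation: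
  fixes P Q W :: "real^'n^'n" and H :: "real^'n^'p"
  assumes "P ** Q = mat 1" "Q ** P = mat 1" "transpose Q = Q" "neg_def_mat (transpose W + W)"
  obtains \<gamma> where "\<gamma> > 0"
    "\<And>x w. 0 \<le> (H *v x) \<bullet> w \<Longrightarrow>
       2 * (x \<bullet> (Q *v ((W ** Q) *v x + (- (P ** transpose H)) *v w))) \<le> - \<gamma> * (x \<bullet> (Q *v x))"
proof -
  obtain c where "c > 0" and c: "\<And>y. y \<bullet> ((transpose W + W) *v y) \<le> - c * (norm y)\<^sup>2"
    using neg_def_mat_quadratic_form_le[OF assms(4)] by blast
  obtain C where "C > 0" and C: "\<And>y. y \<bullet> (P *v y) \<le> C * (norm y)\<^sup>2"
    using quadratic_form_le[of P] by blast
  have "2 * (x \<bullet> (Q *v ((W ** Q) *v x + (- (P ** transpose H)) *v w))) \<le> - (c / C) * (x \<bullet> (Q *v x))"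
    if "0 \<le> (H *v x) \<bullet> w" for x w
  proof -
    have "x \<bullet> (Q *v x) \<le> C * (norm (Q *v x))\<^sup>2"
      using C quadratic_form_right_inverse[OF assms(1)] by metis
    then have "(c / C) * (x \<bullet> (Q *v x)) \<le> c * (norm (Q *v x))\<^sup>2"
      using \<open>c > 0\<close> \<open>C > 0\<close> by (simp add: field_simps)
    then show ?thesis
      using c[of "Q *v x"] that closed_loop_lyapunov_derivative[OF assms(2,3), of x W H w]
      by linarith
  qed
  with \<open>c > 0\<close> \<open>C > 0\<close> show ?thesis using that by (meson divide_pos_pos)
qed

section \<open>Sector nonlinearities, radial retraction and Lipschitz bounds\<close>

lemma sector_continuous_zero:
  fixes g :: "'a::real_inner \<Rightarrow> 'a"
  assumes "isCont g 0" "\<And>z. 0 \<le> z \<bullet> g z"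
  shows "g 0 = 0"
proof -
  define w where "w = g 0"
  have "((\<lambda>e::real. - (e *\<^sub>R w)) \<longlongrightarrow> 0) (at_right 0)"
    by (auto intro!: tendsto_eq_intros)
  then have "((\<lambda>e. w \<bullet> g (- (e *\<^sub>R w))) \<longlongrightarrow> w \<bullet> w) (at_right 0)"
    unfolding w_def by (intro tendsto_inner tendsto_const isCont_tendsto_compose[OF assms(1)])
  moreover have "\<forall>\<^sub>F e in at_right 0. w \<bullet> g (- (e *\<^sub>R w)) \<le> 0"
    using eventually_at_right_less
  proof eventually_elim
    case (elim e)
    have "0 \<le> - (e *\<^sub>R w) \<bullet> g (- (e *\<^sub>R w))" by (rule assms(2))
    with elim show ?case by (simp add: mult_le_0_iff)
  qed
  ultimately have "w \<bullet> w \<le> 0" by (rule tendsto_upperbound) simp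
  then show ?thesis by (metis inner_gt_zero_iff not_less w_def)
qed

definition ball_retraction :: "real \<Rightarrow> 'a::real_normed_vector \<Rightarrow> 'a" where
  "ball_retraction r x = (if norm x \<le> r then x else (r / norm x) *\<^sub>R x)"

lemma ball_retraction_inside: "norm x \<le> r \<Longrightarrow> ball_retraction r x = x"
  by (simp add: ball_retraction_def)

lemma norm_ball_retraction_le: "0 \<le> r \<Longrightarrow> norm (ball_retraction r x) \<le> r"
  by (auto simp: ball_retraction_def)

lemma ball_retraction_eq_scaleR:
  assumes "r > 0"
  obtains c where "c > 0" "ball_retraction r x = c *\<^sub>R x"
proof (cases "norm x \<le> r")
  case True
  then show ?thesis using that[of 1] by (simp add: ball_retraction_def)
next
  case False
  with assms have "norm x > 0" by linarith
  with assms False show ?thesis using that[of "r / norm x"] by (simp add: ball_retraction_def)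
qed

lemma ball_retraction_eq_closest_point:
  fixes x :: "'a::euclidean_space"
  assumes "r > 0"
  shows "ball_retraction r x = closest_point (cball 0 r) x"
proof (rule closest_point_unique)
  show "ball_retraction r x \<in> cball 0 r"
    using assms norm_ball_retraction_le[of r x] by simp
  show "\<forall>z\<in>cball 0 r. dist x (ball_retraction r x) \<le> dist x z"
  proof (cases "norm x \<le> r")
    case False
    then have nx: "norm x > 0" "r / norm x \<le> 1" using assms by (auto simp: divide_le_eq_1)
    have "dist x (ball_retraction r x) = norm ((1 - r / norm x) *\<^sub>R x)"
      using False by (simp add: ball_retraction_def dist_norm algebra_simps)
    also have "\<dots> = norm x - r"
      using nx by (simp add: abs_of_nonneg) (simp add: field_simps)
    moreover have "norm x - r \<le> norm (x - z)" if "norm z \<le> r" for z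
      using norm_triangle_ineq2[of x z] that by linarith
    ultimately show ?thesis by (auto simp: dist_norm)
  qed (simp add: ball_retraction_def)
qed auto

lemma lipschitz_on_ball_retraction:
  fixes U :: "'a::euclidean_space set"
  assumes "r > 0"
  shows "1-lipschitz_on U (ball_retraction r)"
  using closest_point_lipschitz[of "cball (0::'a) r"] assms
  by (auto intro!: lipschitz_onI simp: ball_retraction_eq_closest_point)

lemma continuous_on_ball_retraction [continuous_intros]:
  fixes w :: "'b::topological_space \<Rightarrow> 'a::euclidean_space"
  assumes "r > 0" "continuous_on U w"
  shows "continuous_on U (\<lambda>s. ball_retraction r (w s))"
  using lipschitz_on_continuous_on[OF lipschitz_on_ball_retraction[OF assms(1)]]
    continuous_on_compose2[OF _ assms(2)] by blast

lemma local_lipschitz_uniform_on_compact: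
  fixes f :: "'t::metric_space \<Rightarrow> 'a::metric_space \<Rightarrow> 'b::metric_space"
  assumes ll: "local_lipschitz UNIV UNIV f" and "compact T" "compact X"
  obtains \<delta> L where "\<delta> > 0" "0 \<le> L"
    "\<And>t x. t \<in> T \<Longrightarrow> x \<in> X \<Longrightarrow> L-lipschitz_on (cball x \<delta>) (f t)"
proof -
  have "\<exists>u L. u > 0 \<and> (\<forall>s\<in>cball (fst p) u. L-lipschitz_on (cball (snd p) u) (f s))" for p
    using local_lipschitzE[OF ll, of "fst p" "snd p"] by (metis Int_UNIV_right UNIV_I)
  then obtain u Lp where u: "\<And>p. u p > 0"
    and Lp: "\<And>p s. s \<in> cball (fst p) (u p) \<Longrightarrow> (Lp p)-lipschitz_on (cball (snd p) (u p)) (f s)"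
    by metis
  let ?box = "\<lambda>p. ball (fst p) (u p / 2) \<times> ball (snd p) (u p / 2)"
  have cover: "T \<times> X \<subseteq> (\<Union>p\<in>T \<times> X. ?box p)"
    using u by (auto simp: half_gt_zero)
  have box_open: "\<And>p. p \<in> T \<times> X \<Longrightarrow> open (?box p)" by (intro open_Times open_ball)
  obtain C where "C \<subseteq> T \<times> X" and C: "finite C" "T \<times> X \<subseteq> (\<Union>p\<in>C. ?box p)"
    by (rule compactE_image[OF compact_Times[OF assms(2,3)] box_open cover])
  define \<delta> where "\<delta> = Min (insert 1 ((\<lambda>p. u p / 2) ` C))"
  define L where "L = Max (insert 0 (Lp ` C))"
  have "L-lipschitz_on (cball x \<delta>) (f t)" if t: "t \<in> T" and x: "x \<in> X" for t x
  proof -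
    obtain p where p: "p \<in> C" "dist (fst p) t < u p / 2" "dist (snd p) x < u p / 2"
      using C(2) t x by fastforce
    have \<delta>_le: "\<delta> \<le> u p / 2" using p(1) C(1) unfolding \<delta>_def by (intro Min_le) auto
    have "cball x \<delta> \<subseteq> cball (snd p) (u p)"
    proof
      fix z assume "z \<in> cball x \<delta>"
      then show "z \<in> cball (snd p) (u p)"
        using p(3) \<delta>_le dist_triangle[of "snd p" z x] by simp
    qed
    moreover have "Lp p \<le> L" using p(1) C(1) unfolding L_def by (intro Max_ge) auto
    moreover have "t \<in> cball (fst p) (u p)"
      using p(2) zero_le_dist[of "fst p" t] unfolding mem_cball by linarith
    ultimately show ?thesis using Lp by (blast intro: lipschitz_on_mono)
  qed
  moreover have "\<delta> > 0" "0 \<le> L" using u C(1) by (auto simp: \<delta>_def L_def)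
  ultimately show ?thesis using that by blast
qed

lemma lipschitz_on_convex_if_lipschitz_on_cballs:
  fixes g :: "'a::real_normed_vector \<Rightarrow> 'b::metric_space"
  assumes "convex S" "\<delta> > 0" "0 \<le> L" and local: "\<And>x. x \<in> S \<Longrightarrow> L-lipschitz_on (cball x \<delta>) g"
  shows "L-lipschitz_on S g"
proof (rule lipschitz_onI[OF _ \<open>0 \<le> L\<close>])
  fix x y assume x: "x \<in> S" and y: "y \<in> S"
  define N :: nat where "N = nat \<lceil>dist x y / \<delta>\<rceil> + 1"
  have "real N > 0" by (simp add: N_def)
  moreover have "dist x y / \<delta> \<le> real N" unfolding N_def by linarith
  ultimately have N: "real N > 0" "dist x y / real N \<le> \<delta>"
    using \<open>\<delta> > 0\<close> by (simp_all add: field_simps)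
  define p where "p k = x + (real k / real N) *\<^sub>R (y - x)" for k :: nat
  have p_in: "p k \<in> S" if "k \<le> N" for k
  proof -
    have "p k = (1 - real k / real N) *\<^sub>R x + (real k / real N) *\<^sub>R y"
      by (simp add: p_def algebra_simps)
    then show ?thesis
      using \<open>convex S\<close> x y that N(1) unfolding convex_alt by (simp add: divide_le_eq_1)
  qed
  have p_step: "dist (p (Suc k)) (p k) = dist x y / real N" for k
  proof -
    have "p (Suc k) - p k = (1 / real N) *\<^sub>R (y - x)"
      by (simp add: p_def algebra_simps add_divide_distrib)
    then show ?thesis using N(1) by (simp add: dist_norm norm_minus_commute)
  qed
  have "dist (g (p k)) (g x) \<le> L * (real k * (dist x y / real N))" if "k \<le> N" for k
    using that
  proof (induction k)
    case (Suc k)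
    have "p (Suc k) \<in> cball (p k) \<delta>" using p_step[of k] N(2) by (simp add: dist_commute)
    then have "dist (g (p (Suc k))) (g (p k)) \<le> L * (dist x y / real N)"
      using local[OF p_in[of k]] Suc.prems p_step[of k] \<open>\<delta> > 0\<close>
      by (metis centre_in_cball less_imp_le Suc_leD lipschitz_onD)
    moreover have "L * (real (Suc k) * (dist x y / real N))
        = L * (real k * (dist x y / real N)) + L * (dist x y / real N)"
      by (simp add: algebra_simps add_divide_distrib)
    ultimately show ?case
      using Suc dist_triangle[of "g (p (Suc k))" "g x" "g (p k)"] by linarith
  qed (simp add: p_def)
  moreover have "p N = y" using N(1) by (simp add: p_def)
  moreover have "real N * (dist x y / real N) = dist x y" using N(1) by simp
  ultimately show "dist (g x) (g y) \<le> L * dist x y"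
    by (metis dist_commute order_refl)
qed

lemma local_lipschitz_imp_lipschitz_on_compact_convex:
  fixes f :: "'t::metric_space \<Rightarrow> 'a::euclidean_space \<Rightarrow> 'b::metric_space"
  assumes "local_lipschitz UNIV UNIV f" "compact T" "compact X" "convex X"
  obtains L where "\<And>t. t \<in> T \<Longrightarrow> L-lipschitz_on X (f t)"
proof -
  obtain \<delta> L where "\<delta> > 0" "0 \<le> L" "\<And>t x. t \<in> T \<Longrightarrow> x \<in> X \<Longrightarrow> L-lipschitz_on (cball x \<delta>) (f t)"
    using local_lipschitz_uniform_on_compact[OF assms(1-3)] by blast
  then show ?thesis
    using that lipschitz_on_convex_if_lipschitz_on_cballs[OF assms(4)] by blast
qed

section \<open>Lyapunov decay along integral solutions\<close>

lemma piecewise_continuous_in_t_compose: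
  fixes f :: "real \<Rightarrow> 'a::topological_space \<Rightarrow> 'b::topological_space"
  assumes "piecewise_continuous_in_t f"
  obtains S where "finite S"
    "\<And>w. continuous_on {a..b} w \<Longrightarrow> continuous_on ({a..b} - S) (\<lambda>s. f s (w s))"
proof -
  obtain S where S: "finite S" "continuous_on (({a..b} - S) \<times> UNIV) (\<lambda>(t, z). f t z)"
    using assms unfolding piecewise_continuous_in_t_def by blast
  have "continuous_on ({a..b} - S) (\<lambda>s. f s (w s))" if "continuous_on {a..b} w" for w
  proof -
    have "continuous_on ({a..b} - S) (\<lambda>s. (s, w s))"
      by (intro continuous_intros continuous_on_subset[OF that]) auto
    from continuous_on_compose2[OF S(2) this] show ?thesis by auto
  qed
  with S(1) show ?thesis using that by blast
qed

lemma borel_measurable_continuous_off_finite: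
  fixes g :: "real \<Rightarrow> 'a::euclidean_space"
  assumes "finite S" "continuous_on ({a..b} - S) g"
  shows "g \<in> borel_measurable (lebesgue_on {a..b})"
proof -
  have "S \<in> sets lebesgue" using assms(1) by (intro negligible_imp_sets negligible_finite)
  then have "{a..b} - S \<in> sets lebesgue" by (intro sets.Diff) auto
  then have "g measurable_on ({a..b} - S)"
    using continuous_imp_measurable_on_sets_lebesgue[OF assms(2)]
    by (simp add: measurable_on_iff_borel_measurable)
  then have "g measurable_on {a..b}"
    by (rule measurable_on_spike_set) (auto intro: negligible_subset[OF negligible_finite[OF assms(1)]])
  then show ?thesis by (simp add: measurable_on_iff_borel_measurable)
qed

lemma has_vector_derivative_integral_equation:
  fixes g y :: "real \<Rightarrow> 'a::banach"
  assumes y: "\<And>t. t \<in> {a..b} \<Longrightarrow> (g has_integral (y t - y a)) {a..t}"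
    and "finite S" and g: "continuous_on ({a..b} - S) g" and t: "t \<in> {a<..<b} - S"
  shows "(y has_vector_derivative g t) (at t)"
proof -
  have t': "t \<in> {a..b} - S" using t by auto
  have "g integrable_on {a..b}" using y[of b] t by auto
  moreover have "continuous (at t within ({a..b} - S)) g"
    using g t' by (simp add: continuous_on_eq_continuous_within)
  ultimately have "((\<lambda>u. integral {a..u} g) has_vector_derivative g t) (at t within ({a..b} - S))"
    using integral_has_vector_derivative_continuous_at[OF _ t' \<open>finite S\<close>] by blast
  then have "((\<lambda>u. integral {a..u} g) has_vector_derivative g t) (at t within ({a<..<b} - S))"
    by (rule has_vector_derivative_within_subset) auto
  moreover have op: "open ({a<..<b} - S)" using \<open>finite S\<close> by (simp add: open_Diff finite_imp_closed)
  ultimately have "((\<lambda>u. integral {a..u} g) has_vector_derivative g t) (at t)"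
    using has_vector_derivative_within_open[OF t op] by blast
  then have "((\<lambda>u. y a + integral {a..u} g) has_vector_derivative g t) (at t)"
    using has_vector_derivative_add[OF has_vector_derivative_const] by fastforce
  moreover have "y a + integral {a..u} g = y u" if "u \<in> {a<..<b} - S" for u
    using y[of u] that by (simp add: integral_unique)
  ultimately show ?thesis
    by (rule has_vector_derivative_transform_within_open[OF _ op t])
qed

lemma has_real_derivative_quadratic_form:
  fixes Q :: "real^'n^'n"
  assumes "(y has_vector_derivative y') (at t)" "transpose Q = Q"
  shows "((\<lambda>u. y u \<bullet> (Q *v y u)) has_real_derivative 2 * (y t \<bullet> (Q *v y'))) (at t)"
proof -
  have "((\<lambda>u. Q *v y u) has_vector_derivative Q *v y') (at t)"
    by (rule bounded_linear.has_vector_derivative[OF matrix_vector_mul_bounded_linear assms(1)])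
  from bounded_bilinear.has_vector_derivative[OF bounded_bilinear_inner assms(1) this]
  have "((\<lambda>u. y u \<bullet> (Q *v y u)) has_vector_derivative (y t \<bullet> (Q *v y') + y' \<bullet> (Q *v y t))) (at t)" .
  moreover have "y' \<bullet> (Q *v y t) = y t \<bullet> (Q *v y')"
    using assms(2) by (metis dot_lmul_matrix inner_commute transpose_matrix_vector)
  ultimately show ?thesis by (simp add: has_real_derivative_iff_has_vector_derivative)
qed

lemma quadratic_form_exponential_decay:
  fixes Q :: "real^'n^'n" and y g :: "real \<Rightarrow> real^'n"
  assumes "transpose Q = Q" "a \<le> b" "continuous_on {a..b} y"
    and y: "\<And>t. t \<in> {a..b} \<Longrightarrow> (g has_integral (y t - y a)) {a..t}"
    and "finite S" "continuous_on ({a..b} - S) g"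
    and dissipative: "\<And>s. s \<in> {a..b} \<Longrightarrow> 2 * (y s \<bullet> (Q *v g s)) \<le> - \<gamma> * (y s \<bullet> (Q *v y s))"
  shows "y b \<bullet> (Q *v y b) \<le> exp (- \<gamma> * (b - a)) * (y a \<bullet> (Q *v y a))"
proof -
  define W where "W t = exp (\<gamma> * t) * (y t \<bullet> (Q *v y t))" for t
  define W' where "W' t = exp (\<gamma> * t) * (\<gamma> * (y t \<bullet> (Q *v y t)) + 2 * (y t \<bullet> (Q *v g t)))" for t
  have "continuous_on {a..b} W"
    unfolding W_def by (intro continuous_intros assms(3) continuous_on_compose2[OF _ assms(3)]) auto
  moreover have "(W has_vector_derivative W' t) (at t)" if "t \<in> {a..b} - (S \<union> {a, b})" for t
  proof -
    have "(y has_vector_derivative g t) (at t)"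
      using that by (intro has_vector_derivative_integral_equation[OF y \<open>finite S\<close> assms(6)]) auto
    from has_real_derivative_quadratic_form[OF this assms(1)]
    have "(W has_real_derivative W' t) (at t)"
      unfolding W_def W'_def by (auto intro!: derivative_eq_intros simp: algebra_simps)
    then show ?thesis by (simp add: has_real_derivative_iff_has_vector_derivative)
  qed
  ultimately have "(W' has_integral (W b - W a)) {a..b}"
    using \<open>finite S\<close> \<open>a \<le> b\<close> by (intro fundamental_theorem_of_calculus_strong[of "S \<union> {a, b}"]) auto
  moreover have "W' t \<le> 0" if "t \<in> {a..b}" for t
    using dissipative[OF that] by (simp add: W'_def mult_nonneg_nonpos)
  ultimately have "W b \<le> W a"
    using has_integral_nonneg[of "\<lambda>t. - W' t" "- (W b - W a)" "{a..b}"]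
    by (auto dest: has_integral_neg)
  then have "exp (- \<gamma> * b) * W b \<le> exp (- \<gamma> * b) * W a" by simp
  then show ?thesis
    by (simp add: W_def mult.assoc[symmetric] flip: exp_add) (simp add: algebra_simps)
qed

section \<open>Existence of integral solutions by Picard iteration\<close>

lemma has_integral_power_shifted:
  assumes "a \<le> t"
  shows "((\<lambda>s. c * (s - a) ^ k) has_integral (c * (t - a) ^ Suc k / real (Suc k))) {a..t}"
proof -
  have "((\<lambda>s. c * (s - a) ^ Suc k / real (Suc k)) has_real_derivative
          c * (real (Suc k) * (s - a) ^ k * 1) / real (Suc k)) (at s within {a..t})" for s
    by (intro derivative_eq_intros) auto
  from fundamental_theorem_of_calculus[OF assms, of "\<lambda>s. c * (s - a) ^ Suc k / real (Suc k)"] this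
  show ?thesis by (simp add: has_real_derivative_iff_has_vector_derivative)
qed

lemma integrable_on_lipschitz_along:
  fixes G :: "real \<Rightarrow> 'a::euclidean_space \<Rightarrow> 'b::euclidean_space"
  assumes "\<And>s. s \<in> {a..b} \<Longrightarrow> L-lipschitz_on UNIV (G s)" "\<And>s. G s 0 = 0"
    and "(\<lambda>s. G s (y s)) \<in> borel_measurable (lebesgue_on {a..b})" "continuous_on {a..b} y"
  shows "(\<lambda>s. G s (y s)) integrable_on {a..b}"
proof (rule measurable_bounded_by_integrable_imp_integrable[OF assms(3)])
  show "(\<lambda>s. L * norm (y s)) integrable_on {a..b}"
    by (intro integrable_continuous_interval continuous_intros assms(4))
  show "norm (G s (y s)) \<le> L * norm (y s)" if "s \<in> {a..b}" for s
    using lipschitz_on_normD[OF assms(1)[OF that], of "y s" 0] assms(2) by simp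
qed simp

lemma tendsto_integral_lipschitz_uniform_limit:
  fixes G :: "real \<Rightarrow> 'a::euclidean_space \<Rightarrow> 'b::euclidean_space"
  assumes lim: "uniform_limit {a..b} y x sequentially"
    and lip: "\<And>s. s \<in> {a..b} \<Longrightarrow> L-lipschitz_on UNIV (G s)"
    and int: "\<And>n. (\<lambda>s. G s (y n s)) integrable_on {a..b}" "(\<lambda>s. G s (x s)) integrable_on {a..b}"
  shows "(\<lambda>n. integral {a..b} (\<lambda>s. G s (y n s))) \<longlonglongrightarrow> integral {a..b} (\<lambda>s. G s (x s))"
proof (rule tendstoI)
  fix e :: real assume "e > 0"
  define e' where "e' = e / (2 * (\<bar>L\<bar> + 1) * (\<bar>b - a\<bar> + 1))"
  have L: "0 \<le> L" if "a \<le> b" using lip[of a] that by (auto intro: lipschitz_on_nonneg)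
  have "e' > 0" using \<open>e > 0\<close> by (simp add: e'_def)
  with lim have "\<forall>\<^sub>F n in sequentially. \<forall>s\<in>{a..b}. dist (y n s) (x s) < e'"
    by (simp add: uniform_limit_iff)
  then show "\<forall>\<^sub>F n in sequentially.
      dist (integral {a..b} (\<lambda>s. G s (y n s))) (integral {a..b} (\<lambda>s. G s (x s))) < e"
  proof eventually_elim
    case (elim n)
    have "norm (integral {a..b} (\<lambda>s. G s (y n s) - G s (x s))) \<le> integral {a..b} (\<lambda>s. L * e')"
    proof (rule integral_norm_bound_integral)
      fix s assume s: "s \<in> {a..b}"
      have "norm (G s (y n s) - G s (x s)) \<le> L * norm (y n s - x s)"
        by (rule lipschitz_on_normD[OF lip[OF s]]) auto
      also have "\<dots> \<le> L * e'"
        using elim s L by (intro mult_left_mono) (auto simp: dist_norm less_imp_le)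
      finally show "norm (G s (y n s) - G s (x s)) \<le> L * e'" .
    qed (use int in \<open>auto intro: integrable_diff\<close>)
    also have "\<dots> \<le> (\<bar>b - a\<bar> + 1) * (\<bar>L\<bar> * e')"
    proof (cases "a \<le> b")
      case True
      then have "0 \<le> L * e'" using L \<open>e' > 0\<close> by simp
      with True L show ?thesis by (simp add: abs_of_nonneg distrib_right mult.assoc)
    qed (use \<open>e' > 0\<close> in simp)
    also have "\<dots> \<le> (\<bar>b - a\<bar> + 1) * ((\<bar>L\<bar> + 1) * e')"
      using \<open>e' > 0\<close> by (intro mult_left_mono) auto
    also have "\<dots> = e / 2"
      using abs_ge_zero[of L] abs_ge_zero[of "b - a"] by (simp add: e'_def) (simp add: field_simps)
    also have "\<dots> < e" using \<open>e > 0\<close> by simp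
    finally show ?case by (simp add: dist_norm integral_diff int)
  qed
qed

lemma continuous_on_atLeast_if_atLeastAtMost:
  fixes x :: "real \<Rightarrow> 'a::topological_space"
  assumes "\<And>T. continuous_on {t0..T} x"
  shows "continuous_on {t0..} x"
  unfolding continuous_on_eq_continuous_within
proof
  fix t assume "t \<in> {t0..}"
  then have "continuous (at t within {t0..t + 1}) x"
    using assms[of "t + 1"] by (simp add: continuous_on_eq_continuous_within)
  moreover have "at t within {t0..} = at t within {t0..t + 1}"
    by (rule at_within_nhd[where S = "{t - 1<..<t + 1}"]) auto
  ultimately show "continuous (at t within {t0..}) x" by (simp add: continuous_within)
qed

primrec picard_iterate :: "(real \<Rightarrow> 'a \<Rightarrow> 'a) \<Rightarrow> real \<Rightarrow> 'a \<Rightarrow> nat \<Rightarrow> real \<Rightarrow> 'a::euclidean_space"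
  where
    "picard_iterate G t0 x0 0 t = x0"
  | "picard_iterate G t0 x0 (Suc k) t = x0 + integral {t0..t} (\<lambda>s. G s (picard_iterate G t0 x0 k s))"

declare picard_iterate.simps(2) [simp del]

lemma picard_iterate_initial [simp]: "picard_iterate G t0 x0 k t0 = x0"
  by (cases k) (simp_all add: picard_iterate.simps(2))

definition picard_limit :: "(real \<Rightarrow> 'a \<Rightarrow> 'a) \<Rightarrow> real \<Rightarrow> 'a \<Rightarrow> real \<Rightarrow> 'a::euclidean_space" where
  "picard_limit G t0 x0 t = lim (\<lambda>k. picard_iterate G t0 x0 k t)"

context
  fixes G :: "real \<Rightarrow> 'a::euclidean_space \<Rightarrow> 'a" and t0 :: real and x0 :: 'a
  assumes lipschitz_on_intervals: "\<And>T. \<exists>L. \<forall>s\<in>{t0..T}. L-lipschitz_on UNIV (G s)"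
    and G_zero: "\<And>s. G s 0 = 0"
    and measurable_along_continuous:
      "\<And>y T. continuous_on {t0..T} y \<Longrightarrow> (\<lambda>s. G s (y s)) \<in> borel_measurable (lebesgue_on {t0..T})"
begin

lemma integrable_along_continuous:
  assumes "continuous_on {t0..T} y"
  shows "(\<lambda>s. G s (y s)) integrable_on {t0..T}"
proof -
  obtain L where "\<forall>s\<in>{t0..T}. L-lipschitz_on UNIV (G s)" using lipschitz_on_intervals by blast
  then show ?thesis
    using integrable_on_lipschitz_along[OF _ G_zero measurable_along_continuous[OF assms] assms]
    by blast
qed

lemma continuous_on_picard_iterate: "continuous_on {t0..T} (picard_iterate G t0 x0 k)"
proof (induction k arbitrary: T)
  case (Suc k)
  have "continuous_on {t0..T} (\<lambda>t. x0 + integral {t0..t} (\<lambda>s. G s (picard_iterate G t0 x0 k s)))"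
    by (intro continuous_intros indefinite_integral_continuous_1 integrable_along_continuous Suc.IH)
  then show ?case by (simp add: fun_eq_iff picard_iterate.simps(2))
qed (simp add: fun_eq_iff)

lemma picard_iterate_diff_le:
  assumes lip: "\<And>s. s \<in> {t0..T} \<Longrightarrow> L-lipschitz_on UNIV (G s)" and "0 \<le> L"
    and C: "\<And>t. t \<in> {t0..T} \<Longrightarrow> norm (picard_iterate G t0 x0 1 t - x0) \<le> C"
    and t: "t \<in> {t0..T}"
  shows "norm (picard_iterate G t0 x0 (Suc k) t - picard_iterate G t0 x0 k t)
           \<le> C * (L * (t - t0)) ^ k / fact k"
  using t
proof (induction k arbitrary: t)
  case 0
  then show ?case using C by simp
next
  case (Suc k)
  let ?Y = "picard_iterate G t0 x0"
  have int: "(\<lambda>s. G s (?Y j s)) integrable_on {t0..t}" for j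
    by (intro integrable_along_continuous continuous_on_picard_iterate)
  have "norm (?Y (Suc (Suc k)) t - ?Y (Suc k) t)
      = norm (integral {t0..t} (\<lambda>s. G s (?Y (Suc k) s) - G s (?Y k s)))"
    unfolding picard_iterate.simps(2)[of G t0 x0 "Suc k" t] picard_iterate.simps(2)[of G t0 x0 k t]
    by (simp add: integral_diff int)
  also have "\<dots> \<le> integral {t0..t} (\<lambda>s. (C * L ^ Suc k / fact k) * (s - t0) ^ k)"
  proof (rule integral_norm_bound_integral)
    show "(\<lambda>s. (C * L ^ Suc k / fact k) * (s - t0) ^ k) integrable_on {t0..t}"
      by (intro integrable_continuous_interval continuous_intros)
    fix s assume s: "s \<in> {t0..t}"
    then have sT: "s \<in> {t0..T}" using Suc.prems by auto
    have "norm (G s (?Y (Suc k) s) - G s (?Y k s)) \<le> L * norm (?Y (Suc k) s - ?Y k s)"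
      by (rule lipschitz_on_normD[OF lip[OF sT]]) auto
    also have "\<dots> \<le> L * (C * (L * (s - t0)) ^ k / fact k)"
      using Suc.IH[OF sT] \<open>0 \<le> L\<close> by (rule mult_left_mono)
    finally show "norm (G s (?Y (Suc k) s) - G s (?Y k s)) \<le> (C * L ^ Suc k / fact k) * (s - t0) ^ k"
      by (simp add: power_mult_distrib mult_ac)
  qed (auto intro: integrable_diff int)
  also have "\<dots> = (C * L ^ Suc k / fact k) * (t - t0) ^ Suc k / real (Suc k)"
    using Suc.prems by (intro integral_unique has_integral_power_shifted) auto
  also have "\<dots> = C * (L * (t - t0)) ^ Suc k / fact (Suc k)"
    unfolding power_mult_distrib fact_Suc by (simp add: divide_simps)
  finally show ?case .
qed

lemma uniform_limit_picard_iterate: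
  "uniform_limit {t0..T} (picard_iterate G t0 x0) (picard_limit G t0 x0) sequentially"
proof (cases "t0 \<le> T")
  case True
  let ?Y = "picard_iterate G t0 x0"
  obtain L where L: "\<And>s. s \<in> {t0..T} \<Longrightarrow> L-lipschitz_on UNIV (G s)"
    using lipschitz_on_intervals by blast
  have "0 \<le> L" using L[of t0] True by (auto intro: lipschitz_on_nonneg)
  have "compact ((\<lambda>t. ?Y 1 t - x0) ` {t0..T})"
    by (intro compact_continuous_image continuous_intros continuous_on_picard_iterate) simp
  then obtain C where C: "\<And>t. t \<in> {t0..T} \<Longrightarrow> norm (?Y 1 t - x0) \<le> C"
    using compact_imp_bounded bounded_iff by (metis imageI)
  define M where "M k = C * (inverse (fact k) * (L * (T - t0)) ^ k)" for k
  have "0 \<le> C" using C[of t0] True norm_ge_zero order_trans by fastforce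
  have "norm (?Y (Suc k) t - ?Y k t) \<le> M k" if "t \<in> {t0..T}" for k t
  proof -
    have "(L * (t - t0)) ^ k \<le> (L * (T - t0)) ^ k"
      using that \<open>0 \<le> L\<close> by (intro power_mono mult_left_mono) auto
    then have "C * (L * (t - t0)) ^ k / fact k \<le> C * (L * (T - t0)) ^ k / fact k"
      using \<open>0 \<le> C\<close> by (intro divide_right_mono mult_left_mono) auto
    with picard_iterate_diff_le[OF L \<open>0 \<le> L\<close> C that, of k] show ?thesis
      by (simp add: M_def divide_inverse mult_ac)
  qed
  moreover have "summable M" unfolding M_def by (intro summable_mult summable_exp)
  ultimately have "uniform_limit {t0..T} (\<lambda>n t. x0 + (\<Sum>i<n. ?Y (Suc i) t - ?Y i t))
      (\<lambda>t. x0 + (\<Sum>i. ?Y (Suc i) t - ?Y i t)) sequentially"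
    by (intro uniform_limit_add uniform_limit_const Weierstrass_m_test)
  moreover have "x0 + (\<Sum>i<n. ?Y (Suc i) t - ?Y i t) = ?Y n t" for n t
    using sum_lessThan_telescope[of "\<lambda>i. ?Y i t" n] by simp
  ultimately have lim: "uniform_limit {t0..T} ?Y (\<lambda>t. x0 + (\<Sum>i. ?Y (Suc i) t - ?Y i t)) sequentially"
    by simp
  have "x0 + (\<Sum>i. ?Y (Suc i) t - ?Y i t) = picard_limit G t0 x0 t" if "t \<in> {t0..T}" for t
    unfolding picard_limit_def using tendsto_uniform_limitI[OF lim that] by (simp add: limI)
  then have "uniform_limit {t0..T} ?Y (\<lambda>t. x0 + (\<Sum>i. ?Y (Suc i) t - ?Y i t)) sequentially
      \<longleftrightarrow> uniform_limit {t0..T} ?Y (picard_limit G t0 x0) sequentially"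
    by (intro uniform_limit_cong') simp_all
  with lim show ?thesis by blast
qed (simp add: uniform_limit_iff)

lemma picard_limit_has_integral:
  assumes "t0 \<le> t"
  shows "((\<lambda>s. G s (picard_limit G t0 x0 s)) has_integral (picard_limit G t0 x0 t - x0)) {t0..t}"
proof -
  let ?Y = "picard_iterate G t0 x0" and ?X = "picard_limit G t0 x0"
  obtain L where L: "\<And>s. s \<in> {t0..t} \<Longrightarrow> L-lipschitz_on UNIV (G s)"
    using lipschitz_on_intervals by blast
  have lim: "uniform_limit {t0..t} ?Y ?X sequentially" by (rule uniform_limit_picard_iterate)
  have "continuous_on {t0..t} ?X"
    by (rule uniform_limit_theorem[OF _ lim]) (auto intro: always_eventually continuous_on_picard_iterate)
  then have int: "(\<lambda>s. G s (?X s)) integrable_on {t0..t}" by (rule integrable_along_continuous)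
  have "(\<lambda>n. ?Y (Suc n) t) \<longlonglongrightarrow> x0 + integral {t0..t} (\<lambda>s. G s (?X s))"
    unfolding picard_iterate.simps(2)
    using tendsto_integral_lipschitz_uniform_limit[OF lim L
        integrable_along_continuous[OF continuous_on_picard_iterate] int]
    by (auto intro: tendsto_intros)
  moreover have "(\<lambda>n. ?Y (Suc n) t) \<longlonglongrightarrow> ?X t"
    using tendsto_uniform_limitI[OF lim, of t] assms by (intro LIMSEQ_Suc) simp
  ultimately have "?X t = x0 + integral {t0..t} (\<lambda>s. G s (?X s))" by (rule LIMSEQ_unique[rotated])
  with int show ?thesis by (simp add: has_integral_integral)
qed

lemma exists_integral_solution:
  "\<exists>x. continuous_on {t0..} x \<and> x t0 = x0 \<and>
     (\<forall>t\<ge>t0. ((\<lambda>s. G s (x s)) has_integral (x t - x t0)) {t0..t})"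
proof -
  let ?X = "picard_limit G t0 x0"
  have X0: "?X t0 = x0" by (simp add: picard_limit_def limI)
  have "continuous_on {t0..T} ?X" for T
    by (rule uniform_limit_theorem[OF _ uniform_limit_picard_iterate])
      (auto intro: always_eventually continuous_on_picard_iterate)
  then have "continuous_on {t0..} ?X" by (rule continuous_on_atLeast_if_atLeastAtMost)
  with X0 picard_limit_has_integral show ?thesis by auto
qed

end

section \<open>Lur'e systems with a sector nonlinearity\<close>

lemma exp_decay_eventually_less:
  fixes c K \<eta> :: real
  assumes "0 < c" "0 < \<eta>"
  obtains T where "0 \<le> T" "\<And>d. T \<le> d \<Longrightarrow> K * exp (- c * d) < \<eta>"
proof -
  have "((\<lambda>d. K * exp (- c * d)) \<longlongrightarrow> 0) at_top" using \<open>0 < c\<close> by real_asymp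
  from order_tendstoD(2)[OF this \<open>0 < \<eta>\<close>]
  obtain T where "\<And>d. T \<le> d \<Longrightarrow> K * exp (- c * d) < \<eta>"
    by (auto simp: eventually_at_top_linorder)
  then show ?thesis using that[of "max T 0"] by simp
qed

lemma GUAS_if_exponential_estimate:
  fixes F :: "real \<Rightarrow> real^'n \<Rightarrow> real^'n"
  assumes "\<And>t. F t 0 = 0" "\<And>t0 x0. \<exists>x. is_solution F t0 x \<and> x t0 = x0"
    and "0 < k" "0 < c"
    and estimate: "\<And>t0 x t. is_solution F t0 x \<Longrightarrow> t0 \<le> t \<Longrightarrow>
                     norm (x t) \<le> k * exp (- c * (t - t0)) * norm (x t0)"
  shows "GUAS F"
proof -
  have bound: "norm (x t) < k * a" if "is_solution F t0 x" "norm (x t0) < a" "t0 \<le> t" for t0 x t a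
  proof -
    have "norm (x t) \<le> k * exp (- c * (t - t0)) * norm (x t0)" using estimate that by blast
    also have "\<dots> \<le> k * 1 * norm (x t0)"
      using that(3) \<open>0 < k\<close> \<open>0 < c\<close> by (intro mult_right_mono mult_left_mono) auto
    also have "\<dots> < k * a" using that(2) \<open>0 < k\<close> by simp
    finally show ?thesis .
  qed
  have "\<exists>\<delta>>0. \<forall>t0 x. is_solution F t0 x \<and> norm (x t0) < \<delta> \<longrightarrow> (\<forall>t\<ge>t0. norm (x t) < \<epsilon>)"
    if "0 < \<epsilon>" for \<epsilon>
    using bound[where a = "\<epsilon> / k"] that \<open>0 < k\<close> by (intro exI[of _ "\<epsilon> / k"]) auto
  moreover have "\<exists>\<beta>. \<forall>t0 x. is_solution F t0 x \<and> norm (x t0) < a \<longrightarrow> (\<forall>t\<ge>t0. norm (x t) < \<beta>)"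
    for a
    using bound by blast
  moreover have "\<exists>T\<ge>0. \<forall>t0 x. is_solution F t0 x \<and> norm (x t0) < a \<longrightarrow> (\<forall>t\<ge>t0 + T. norm (x t) < \<eta>)"
    if \<eta>: "0 < \<eta>" for \<eta> a
  proof -
    obtain T where "0 \<le> T" and T: "\<And>d. T \<le> d \<Longrightarrow> k * a * exp (- c * d) < \<eta>"
      using exp_decay_eventually_less[OF \<open>0 < c\<close> \<eta>] by blast
    have "norm (x t) < \<eta>" if "is_solution F t0 x" "norm (x t0) < a" "t0 + T \<le> t" for t0 x t
    proof -
      have "t0 \<le> t" using that(3) \<open>0 \<le> T\<close> by linarith
      then have "norm (x t) \<le> k * exp (- c * (t - t0)) * norm (x t0)" using estimate that(1) by blast
      also have "\<dots> \<le> k * a * exp (- c * (t - t0))"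
        using that(2) \<open>0 < k\<close> by (simp add: mult_left_mono mult.commute mult.left_commute)
      also have "\<dots> < \<eta>" using T that(3) by simp
      finally show ?thesis .
    qed
    with \<open>0 \<le> T\<close> show ?thesis by blast
  qed
  ultimately show ?thesis using assms(1,2) unfolding GUAS_def by blast
qed

locale lure_system =
  fixes A :: "real^'n^'n" and L :: "real^'p^'n" and H :: "real^'n^'p"
    and f :: "real \<Rightarrow> real^'p \<Rightarrow> real^'p"
    and Q :: "real^'n^'n" and \<gamma> m M :: real
  assumes Q_symmetric: "transpose Q = Q"
    and lyapunov_lower: "0 < m" "\<And>x. m * (norm x)\<^sup>2 \<le> x \<bullet> (Q *v x)"
    and lyapunov_upper: "\<And>x. x \<bullet> (Q *v x) \<le> M * (norm x)\<^sup>2"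
    and decay_rate: "0 < \<gamma>"
    and dissipation:
      "\<And>x w. 0 \<le> (H *v x) \<bullet> w \<Longrightarrow> 2 * (x \<bullet> (Q *v (A *v x + L *v w))) \<le> - \<gamma> * (x \<bullet> (Q *v x))"
    and f_piecewise_continuous: "piecewise_continuous_in_t f"
    and f_local_lipschitz: "local_lipschitz UNIV UNIV f"
    and f_sector: "\<And>t z. 0 \<le> z \<bullet> f t z"
begin

definition closed_loop :: "real \<Rightarrow> real^'n \<Rightarrow> real^'n" where
  "closed_loop t x = A *v x + L *v f t (H *v x)"

lemma f_zero: "f t 0 = 0"
  using f_sector local_lipschitz_continuous_on[OF f_local_lipschitz]
  by (intro sector_continuous_zero) (auto simp: continuous_on_eq_continuous_at)

lemma overshoot_pos: "0 < sqrt (M / m)"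
proof -
  obtain x :: "real^'n" where "norm x = 1" using vector_choose_size[of 1] by auto
  then have "m \<le> M" using lyapunov_lower(2)[of x] lyapunov_upper[of x] by simp
  then show ?thesis using lyapunov_lower(1) by simp
qed

lemma norm_le_if_lyapunov_le:
  assumes "x \<bullet> (Q *v x) \<le> exp (- \<gamma> * d) * (y \<bullet> (Q *v y))"
  shows "norm x \<le> sqrt (M / m) * exp (- (\<gamma> / 2) * d) * norm y"
proof (rule power2_le_imp_le)
  have "exp (- \<gamma> * d) * (y \<bullet> (Q *v y)) \<le> exp (- \<gamma> * d) * (M * (norm y)\<^sup>2)"
    by (intro mult_left_mono lyapunov_upper) simp
  then have bound: "m * (norm x)\<^sup>2 \<le> exp (- \<gamma> * d) * (M * (norm y)\<^sup>2)"
    using assms lyapunov_lower(2)[of x] by linarith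
  have "(exp (- (\<gamma> / 2) * d))\<^sup>2 = exp (- \<gamma> * d)"
    by (simp add: power2_eq_square flip: exp_add)
  moreover have "(sqrt (M / m))\<^sup>2 = M / m" using overshoot_pos by simp
  ultimately have square: "(sqrt (M / m) * exp (- (\<gamma> / 2) * d) * norm y)\<^sup>2 = M / m * exp (- \<gamma> * d) * (norm y)\<^sup>2"
    by (simp add: power_mult_distrib)
  have "(norm x)\<^sup>2 \<le> M / m * exp (- \<gamma> * d) * (norm y)\<^sup>2"
    using bound lyapunov_lower(1) by (simp add: field_simps)
  then show "(norm x)\<^sup>2 \<le> (sqrt (M / m) * exp (- (\<gamma> / 2) * d) * norm y)\<^sup>2"
    unfolding square .
qed (use overshoot_pos in simp)

lemma norm_decay_along:
  fixes y g :: "real \<Rightarrow> _"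
  assumes "a \<le> b" "continuous_on {a..b} y"
    and y: "\<And>t. t \<in> {a..b} \<Longrightarrow> ((\<lambda>s. A *v y s + L *v g s) has_integral (y t - y a)) {a..t}"
    and "finite S" "continuous_on ({a..b} - S) g"
    and sector: "\<And>s. s \<in> {a..b} \<Longrightarrow> 0 \<le> (H *v y s) \<bullet> g s"
  shows "norm (y b) \<le> sqrt (M / m) * exp (- (\<gamma> / 2) * (b - a)) * norm (y a)"
proof (rule norm_le_if_lyapunov_le)
  have "continuous_on ({a..b} - S) (\<lambda>s. A *v y s + L *v g s)"
    using assms(2,5) by (intro continuous_intros continuous_on_subset[OF assms(2)]) auto
  then show "y b \<bullet> (Q *v y b) \<le> exp (- \<gamma> * (b - a)) * (y a \<bullet> (Q *v y a))"
    using quadratic_form_exponential_decay[OF Q_symmetric assms(1,2) y assms(4)] dissipation sector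
    by blast
qed

lemma solution_decay:
  assumes "is_solution closed_loop t0 x" "t0 \<le> t"
  shows "norm (x t) \<le> sqrt (M / m) * exp (- (\<gamma> / 2) * (t - t0)) * norm (x t0)"
proof -
  have x: "continuous_on {t0..t} x"
    using assms unfolding is_solution_def by (auto intro: continuous_on_subset)
  obtain S where "finite S"
    and S: "\<And>w. continuous_on {t0..t} w \<Longrightarrow> continuous_on ({t0..t} - S) (\<lambda>s. f s (w s))"
    using piecewise_continuous_in_t_compose[OF f_piecewise_continuous] by blast
  have "continuous_on ({t0..t} - S) (\<lambda>s. f s (H *v x s))"
    by (intro S continuous_intros x)
  with assms show ?thesis
    by (intro norm_decay_along[OF assms(2) x _ \<open>finite S\<close>])
      (auto simp: is_solution_def closed_loop_def f_sector)
qed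

definition truncated_loop :: "real \<Rightarrow> real \<Rightarrow> real^'n \<Rightarrow> real^'n" where
  "truncated_loop \<rho> t x = A *v x + L *v f t (H *v ball_retraction \<rho> x)"

lemma truncated_loop_sector:
  assumes "0 < \<rho>"
  shows "0 \<le> (H *v x) \<bullet> f t (H *v ball_retraction \<rho> x)"
proof -
  obtain c where "c > 0" and c: "ball_retraction \<rho> x = c *\<^sub>R x"
    using ball_retraction_eq_scaleR[OF assms] by blast
  have "0 \<le> (c *\<^sub>R (H *v x)) \<bullet> f t (c *\<^sub>R (H *v x))" by (rule f_sector)
  with \<open>c > 0\<close> c show ?thesis by (simp add: matrix_vector_mult_scaleR zero_le_mult_iff)
qed

lemma truncated_loop_lipschitz:
  assumes "0 < \<rho>"
  obtains K where "\<And>s. s \<in> {t0..T} \<Longrightarrow> K-lipschitz_on UNIV (truncated_loop \<rho> s)"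
proof -
  obtain CA where CA: "CA-lipschitz_on UNIV ((*v) A)"
    using bounded_linear.lipschitz_boundE[OF matrix_vector_mul_bounded_linear] by blast
  obtain CL where CL: "CL-lipschitz_on UNIV ((*v) L)"
    using bounded_linear.lipschitz_boundE[OF matrix_vector_mul_bounded_linear] by blast
  obtain CH where CH: "CH-lipschitz_on UNIV ((*v) H)"
    using bounded_linear.lipschitz_boundE[OF matrix_vector_mul_bounded_linear] by blast
  define P where "P x = H *v ball_retraction \<rho> x" for x
  have P: "(CH * 1)-lipschitz_on UNIV P"
    unfolding P_def
    by (rule lipschitz_on_compose2[OF lipschitz_on_ball_retraction[OF assms]])
      (rule lipschitz_on_subset[OF CH], simp)
  have "P x \<in> cball 0 (CH * \<rho>)" for x
  proof -
    have "norm (P x) \<le> CH * norm (ball_retraction \<rho> x)"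
      using lipschitz_on_normD[OF CH, of "ball_retraction \<rho> x" 0] by (simp add: P_def)
    also have "\<dots> \<le> CH * \<rho>"
      using lipschitz_on_nonneg[OF CH] norm_ball_retraction_le[of \<rho> x] assms by (simp add: mult_left_mono)
    finally show ?thesis by simp
  qed
  then have image: "P ` UNIV \<subseteq> cball 0 (CH * \<rho>)" by blast
  obtain Lf where Lf: "\<And>s. s \<in> {t0..T} \<Longrightarrow> Lf-lipschitz_on (cball 0 (CH * \<rho>)) (f s)"
    using local_lipschitz_imp_lipschitz_on_compact_convex[OF f_local_lipschitz compact_Icc
        compact_cball convex_cball, of t0 T 0 "CH * \<rho>"] by blast
  have "(CA + CL * (Lf * (CH * 1)))-lipschitz_on UNIV (truncated_loop \<rho> s)" if "s \<in> {t0..T}" for s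
  proof -
    have "(Lf * (CH * 1))-lipschitz_on UNIV (\<lambda>x. f s (P x))"
      by (rule lipschitz_on_compose2[OF P lipschitz_on_subset[OF Lf[OF that] image]])
    then have "(CL * (Lf * (CH * 1)))-lipschitz_on UNIV (\<lambda>x. L *v f s (P x))"
      by (rule lipschitz_on_compose2[OF _ lipschitz_on_subset[OF CL]]) simp
    from lipschitz_on_add[OF CA this] show ?thesis
      by (simp add: truncated_loop_def P_def)
  qed
  then show ?thesis using that by blast
qed

lemma truncated_loop_continuous_off_finite:
  assumes "0 < \<rho>" "continuous_on {t0..T} y"
  obtains S where "finite S" "continuous_on ({t0..T} - S) (\<lambda>s. f s (H *v ball_retraction \<rho> (y s)))"
proof -
  obtain S where "finite S"
    and S: "\<And>w. continuous_on {t0..T} w \<Longrightarrow> continuous_on ({t0..T} - S) (\<lambda>s. f s (w s))"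
    using piecewise_continuous_in_t_compose[OF f_piecewise_continuous] by blast
  moreover have "continuous_on ({t0..T} - S) (\<lambda>s. f s (H *v ball_retraction \<rho> (y s)))"
    by (intro S continuous_intros assms)
  ultimately show ?thesis using that by blast
qed

lemma truncated_loop_solution_exists:
  assumes "0 < \<rho>"
  obtains y where "continuous_on {t0..} y" "y t0 = x0"
    "\<And>t. t0 \<le> t \<Longrightarrow> ((\<lambda>s. truncated_loop \<rho> s (y s)) has_integral (y t - y t0)) {t0..t}"
proof -
  have lip: "\<exists>K. \<forall>s\<in>{t0..T}. K-lipschitz_on UNIV (truncated_loop \<rho> s)" for T
    using truncated_loop_lipschitz[OF assms] by metis
  have zero: "truncated_loop \<rho> s 0 = 0" for s
    using assms by (simp add: truncated_loop_def ball_retraction_inside f_zero)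
  have meas: "(\<lambda>s. truncated_loop \<rho> s (y s)) \<in> borel_measurable (lebesgue_on {t0..T})"
    if yc: "continuous_on {t0..T} y" for y T
  proof -
    obtain S where "finite S"
      and S: "continuous_on ({t0..T} - S) (\<lambda>s. f s (H *v ball_retraction \<rho> (y s)))"
      using truncated_loop_continuous_off_finite[OF assms yc] by blast
    have "continuous_on ({t0..T} - S) (\<lambda>s. truncated_loop \<rho> s (y s))"
      unfolding truncated_loop_def by (intro continuous_intros S continuous_on_subset[OF yc]) auto
    with \<open>finite S\<close> show ?thesis by (rule borel_measurable_continuous_off_finite)
  qed
  from exists_integral_solution[OF lip zero meas, of x0] show ?thesis
    using that by blast
qed

lemma solution_exists: "\<exists>x. is_solution closed_loop t0 x \<and> x t0 = x0"
proof -
  define \<rho> where "\<rho> = sqrt (M / m) * norm x0 + 1"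
  have "0 < \<rho>" using overshoot_pos by (simp add: \<rho>_def add_nonneg_pos)
  then obtain y where y: "continuous_on {t0..} y" "y t0 = x0"
    and y_int: "\<And>t. t0 \<le> t \<Longrightarrow> ((\<lambda>s. truncated_loop \<rho> s (y s)) has_integral (y t - y t0)) {t0..t}"
    using truncated_loop_solution_exists[of \<rho> t0 x0] by blast
  have bounded: "norm (y t) \<le> \<rho>" if "t0 \<le> t" for t
  proof -
    have yc: "continuous_on {t0..t} y" using y(1) by (rule continuous_on_subset) auto
    obtain S where "finite S" "continuous_on ({t0..t} - S) (\<lambda>s. f s (H *v ball_retraction \<rho> (y s)))"
      using truncated_loop_continuous_off_finite[OF \<open>0 < \<rho>\<close> yc] by blast
    then have "norm (y t) \<le> sqrt (M / m) * exp (- (\<gamma> / 2) * (t - t0)) * norm (y t0)"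
      using y_int truncated_loop_sector[OF \<open>0 < \<rho>\<close>]
      by (intro norm_decay_along[OF that yc]) (auto simp: truncated_loop_def)
    also have "\<dots> \<le> sqrt (M / m) * 1 * norm x0"
      unfolding y(2) using that overshoot_pos decay_rate by (intro mult_right_mono mult_left_mono) auto
    finally show ?thesis by (simp add: \<rho>_def)
  qed
  have "((\<lambda>s. closed_loop s (y s)) has_integral (y t - y t0)) {t0..t}" if "t0 \<le> t" for t
  proof -
    have eq: "truncated_loop \<rho> s (y s) = closed_loop s (y s)" if "s \<in> {t0..t}" for s
      using bounded[of s] that by (simp add: truncated_loop_def closed_loop_def ball_retraction_inside)
    show ?thesis by (rule iffD1[OF has_integral_cong[OF eq] y_int[OF that]])
  qed
  with y show ?thesis unfolding is_solution_def by blast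
qed

lemma GUAS_closed_loop: "GUAS (\<lambda>t x. A *v x + L *v f t (H *v x))"
proof -
  have "GUAS closed_loop"
    using overshoot_pos decay_rate solution_decay solution_exists
    by (intro GUAS_if_exponential_estimate[where k = "sqrt (M / m)" and c = "\<gamma> / 2"])
      (auto simp: closed_loop_def f_zero)
  then show ?thesis by (simp add: closed_loop_def[abs_def])
qed

end

lemma lure_system_data_driven:
  fixes H :: "real^'n^'p" and X0 X1 :: "real^'t^'n" and Y1 :: "real^'n^'t"
    and f :: "real \<Rightarrow> real^'p \<Rightarrow> real^'p"
  assumes sym: "transpose (X0 ** Y1) = X0 ** Y1" and pd: "pos_def_mat (X0 ** Y1)"
    and lyap: "neg_def_mat (transpose Y1 ** transpose X1 + X1 ** Y1)"
    and "piecewise_continuous_in_t f" "local_lipschitz UNIV UNIV f" "\<And>t z. 0 \<le> z \<bullet> f t z"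
  obtains \<gamma> m M where "lure_system (X1 ** Y1 ** matrix_inv (X0 ** Y1)) (- (X0 ** Y1 ** transpose H))
    H f (matrix_inv (X0 ** Y1)) \<gamma> m M"
proof -
  define Q where "Q = matrix_inv (X0 ** Y1)"
  have "invertible (X0 ** Y1)" using pd by (rule pos_def_mat_invertible)
  then have PQ: "X0 ** Y1 ** Q = mat 1" and QP: "Q ** (X0 ** Y1) = mat 1"
    and Q_sym: "transpose Q = Q"
    using sym by (simp_all add: Q_def matrix_inv_right matrix_inv_left transpose_matrix_inv_symmetric)
  have "neg_def_mat (transpose (X1 ** Y1) + X1 ** Y1)" using lyap by (simp add: matrix_transpose_mul)
  then obtain \<gamma> where "\<gamma> > 0" and dissipation: "\<And>x w. 0 \<le> (H *v x) \<bullet> w \<Longrightarrow>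
      2 * (x \<bullet> (Q *v ((X1 ** Y1 ** Q) *v x + (- (X0 ** Y1 ** transpose H)) *v w)))
        \<le> - \<gamma> * (x \<bullet> (Q *v x))"
    using closed_loop_dissipation[OF PQ QP Q_sym] by blast
  obtain m where "m > 0" and lower: "\<And>x. m * (norm x)\<^sup>2 \<le> x \<bullet> (Q *v x)"
    using pos_def_mat_quadratic_form_ge[OF pos_def_mat_matrix_inv[OF pd]] unfolding Q_def by blast
  obtain M where upper: "\<And>x. x \<bullet> (Q *v x) \<le> M * (norm x)\<^sup>2"
    using quadratic_form_le by blast
  have "lure_system (X1 ** Y1 ** Q) (- (X0 ** Y1 ** transpose H)) H f Q \<gamma> m M"
    using Q_sym \<open>m > 0\<close> lower upper \<open>\<gamma> > 0\<close> dissipation assms(4-6) by unfold_locales auto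
  then show ?thesis using that unfolding Q_def by blast
qed

theorem mainTheorem5:
  fixes A :: "real^'n^'n" and B :: "real^'m^'n" and L :: "real^'p^'n"
    and H :: "real^'n^'p"
    and U0 :: "real^'t^'m" and X0 :: "real^'t^'n" and X1 :: "real^'t^'n"
    and F0 :: "real^'t^'p"
    and Y1 :: "real^'n^'t" and Y2 :: "real^'p^'t"
  assumes data: "X1 = A ** X0 + B ** U0 + L ** F0"
    and sym: "transpose (X0 ** Y1) = X0 ** Y1"
    and pd: "pos_def_mat (X0 ** Y1)"
    and lyap: "neg_def_mat (transpose Y1 ** transpose X1 + X1 ** Y1)"
    and c1: "X1 ** Y2 + X0 ** Y1 ** transpose H = 0"
    and c2: "X0 ** Y2 = 0"
    and c3: "F0 ** Y2 = mat 1"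
    and c4: "F0 ** Y1 = 0"
  shows "\<forall>f :: real \<Rightarrow> real^'p \<Rightarrow> real^'p.
           piecewise_continuous_in_t f \<and> local_lipschitz UNIV UNIV f \<and>
           (\<forall>t z. z \<bullet> f t z \<ge> 0) \<longrightarrow>
           (let K = U0 ** Y1 ** matrix_inv (X0 ** Y1); M = U0 ** Y2 in
            GUAS (\<lambda>t x. (A + B ** K) *v x + (L + B ** M) *v f t (H *v x)))"
proof (intro allI impI)
  fix f :: "real \<Rightarrow> real^'p \<Rightarrow> real^'p"
  assume "piecewise_continuous_in_t f \<and> local_lipschitz UNIV UNIV f \<and> (\<forall>t z. z \<bullet> f t z \<ge> 0)"
  then obtain \<gamma> m M' where "lure_system (X1 ** Y1 ** matrix_inv (X0 ** Y1))
      (- (X0 ** Y1 ** transpose H)) H f (matrix_inv (X0 ** Y1)) \<gamma> m M'"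
    using lure_system_data_driven[OF sym pd lyap] by blast
  then have "GUAS (\<lambda>t x. (X1 ** Y1 ** matrix_inv (X0 ** Y1)) *v x
      + (- (X0 ** Y1 ** transpose H)) *v f t (H *v x))"
    by (rule lure_system.GUAS_closed_loop)
  moreover have "A + B ** (U0 ** Y1 ** matrix_inv (X0 ** Y1)) = X1 ** Y1 ** matrix_inv (X0 ** Y1)"
    using data c4 matrix_inv_right[OF pos_def_mat_invertible[OF pd]] by (rule data_driven_state_gain)
  moreover have "L + B ** (U0 ** Y2) = - (X0 ** Y1 ** transpose H)"
    using data c1 c2 c3 by (rule data_driven_nonlinearity_gain)
  ultimately show "let K = U0 ** Y1 ** matrix_inv (X0 ** Y1); M = U0 ** Y2 in
      GUAS (\<lambda>t x. (A + B ** K) *v x + (L + B ** M) *v f t (H *v x))"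
    by (simp add: Let_def)
qed

end
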